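(* Let $s\in\{\tfrac12,1,\tfrac32,\dots\}$, $N\ge1$ and $\lambda\in\mathbb{C}$. The transfer matrix $t^{(2s)}_1(u)$ satisfies, for all $u\in\mathbb{C}$, $${}^t\,t^{(2s)}_1(-u-2\lambda s)=(-1)^{N-1}\,t^{(2s)}_1(u),$$ where ${}^t$ denotes the transpose on $(\mathbb{C}^{2s+1})^{\otimes N}$ with respect to the standard tensor-product basis.
   Context: Define $a_j(u)=\sinh[u+(2s+1-j)\lambda]$ and $b_j(\lambda)=\sqrt{\sinh(j\lambda)\sinh[\lambda(2s+1-j)]}$ (fixed choice of square root). Let $R^{(1,2s)}(u)$ be the matrix on $\mathbb{C}^2\otimes\mathbb{C}^{2s+1}$ (indices $\mu,\nu\in\{1,2\}$, $\alpha,\beta\in\{1,\dots,2s+1\}$) whose only nonzero entries are $R_{1j}^{1j}=a_j(u)$, $R_{2j}^{2j}=a_{2s+2-j}(u)$, $R_{1\,j+1}^{2\,j}=R_{2\,j}^{1\,j+1}=b_j(\lambda)$. With auxiliary space $V_a=\mathbb{C}^2$ and quantum spaces $V_1,\dots,V_N\cong\mathbb{C}^{2s+1}$, let $R_{ak}(u)$ be $R^{(1,2s)}(u)$ acting on $V_a\otimes V_k$, and $F_a=\begin{pmatrix}0&1\\1&0\end{pmatrix}$ acting on $V_a$. Then $t^{(2s)}_1(u)={\rm tr}_a\big(R_{a1}(u)\cdots R_{aN}(u)F_a\big)$, an operator on $V_1\otimes\cdots\otimes V_N$. *)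

theory Defs
  imports Complex_Main "HOL-Library.FuncSet"
begin

text \<open>Spin n = 2s (a positive natural number); indices alpha in {1..n+1}, mu in {1,2}.\<close>

definition a_fun :: "nat \<Rightarrow> complex \<Rightarrow> complex \<Rightarrow> nat \<Rightarrow> complex" where
  "a_fun n lam u j = sinh (u + (of_nat (n + 1) - of_nat j) * lam)"

text \<open>The matrix R^(1,2s)(u) on C^2 (x) C^(2s+1); entries indexed by row (mu,alpha)
  and column (nu,beta). b is the chosen square root family b_j.\<close>
definition Rmat :: "nat \<Rightarrow> complex \<Rightarrow> (nat \<Rightarrow> complex) \<Rightarrow> complex \<Rightarrow> nat \<times> nat \<Rightarrow> nat \<times> nat \<Rightarrow> complex" where
  "Rmat n lam b u = (\<lambda>(mu, al) (nu, be).
     if mu = 1 \<and> nu = 1 \<and> al = be \<and> 1 \<le> al \<and> al \<le> n + 1 then a_fun n lam u al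
     else if mu = 2 \<and> nu = 2 \<and> al = be \<and> 1 \<le> al \<and> al \<le> n + 1 then a_fun n lam u (n + 2 - al)
     else if mu = 1 \<and> nu = 2 \<and> al = be + 1 \<and> 1 \<le> be \<and> be \<le> n then b be
     else if mu = 2 \<and> nu = 1 \<and> be = al + 1 \<and> 1 \<le> al \<and> al \<le> n then b al
     else 0)"

text \<open>Matrix entry <al| t(u) |be> of t(u) = tr_a(R_a1(u) ... R_aN(u) F_a), where the
  standard basis vector e_{al 1} (x) ... (x) e_{al N} is given by al : {1..N} -> {1..n+1}.
  Expanding the auxiliary-space matrix product and trace: mu 0, ..., mu N are the
  auxiliary indices, F_a contributes the factor [mu N ~= mu 0].\<close>
definition transfer :: "nat \<Rightarrow> complex \<Rightarrow> (nat \<Rightarrow> complex) \<Rightarrow> nat \<Rightarrow> complex \<Rightarrow> (nat \<Rightarrow> nat) \<Rightarrow> (nat \<Rightarrow> nat) \<Rightarrow> complex" where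
  "transfer n lam b N u al be =
     (\<Sum>mu \<in> Pi\<^sub>E {0..N} (\<lambda>_. {1::nat, 2}).
        (if mu N \<noteq> mu 0 then 1 else 0) *
        (\<Prod>k\<in>{1..N}. Rmat n lam b u (mu (k - 1), al k) (mu k, be k)))"

end

theory Submission
  imports Defs
begin

text \<open>Swapping the two auxiliary labels and transposing the quantum indices turns the entries
  of \<open>R(u)\<close> into those of \<open>R(-u-2\<lambda>s)\<close>, because \<open>a\<^sub>j(-u-2\<lambda>s) = -a\<^bsub>2s+2-j\<^esub>(u)\<close> while the
  off-diagonal entries \<open>b\<^sub>j\<close> are untouched; the only cost is a sign \<open>-1\<close> for every step of an
  auxiliary path that keeps its label. The twist \<open>F\<close> forces the closed auxiliary path of a
  trace term to change label an odd number of times, so the number of steps keeping the label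
  has the parity of \<open>N-1\<close>.\<close>

lemma a_fun_crossing:
  assumes "1 \<le> j" "j \<le> n + 1"
  shows "a_fun n lam (- u - lam * of_nat n) j = - a_fun n lam u (n + 2 - j)"
proof -
  have "- u - lam * of_nat n + (of_nat (n + 1) - of_nat j) * lam
      = - (u + (of_nat (n + 1) - of_nat (n + 2 - j)) * lam)"
    using assms by (simp add: of_nat_diff algebra_simps)
  then show ?thesis
    unfolding a_fun_def by (metis sinh_minus)
qed

lemma Rmat_crossing:
  assumes "mu \<in> {1::nat, 2}" "nu \<in> {1, 2}"
  shows "Rmat n lam b (- u - lam * of_nat n) (3 - mu, be) (3 - nu, al)
       = (if mu = nu then -1 else 1) * Rmat n lam b u (mu, al) (nu, be)"
proof -
  have "a_fun n lam (- u - lam * of_nat n) (n + 2 - j) = - a_fun n lam u j"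
    if "1 \<le> j" "j \<le> n + 1" for j
    using a_fun_crossing[of "n + 2 - j" n lam u] that by simp
  with assms show ?thesis
    by (auto simp: Rmat_def a_fun_crossing)
qed

lemma prod_stay_signs:
  assumes "\<And>k. k \<le> m \<Longrightarrow> mu k \<in> {1::nat, 2}"
  shows "(\<Prod>k\<in>{1..m}. if mu (k - 1) = mu k then -1 else 1 :: 'a :: comm_ring_1)
       = (-1) ^ m * (if mu m = mu 0 then 1 else -1)"
  using assms
proof (induction m)
  case 0
  then show ?case by simp
next
  case (Suc m)
  have labels: "mu 0 \<in> {1, 2}" "mu m \<in> {1, 2}" "mu (Suc m) \<in> {1, 2}"
    using Suc.prems by auto
  have "(\<Prod>k\<in>{1..Suc m}. if mu (k - 1) = mu k then -1 else 1 :: 'a)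
      = (-1) ^ m * (if mu m = mu 0 then 1 else -1) * (if mu m = mu (Suc m) then -1 else 1)"
    using Suc by (simp add: prod.nat_ivl_Suc')
  also have "\<dots> = (-1) ^ Suc m * (if mu (Suc m) = mu 0 then 1 else -1)"
    using labels by auto
  finally show ?case .
qed

definition flip_labels :: "nat \<Rightarrow> (nat \<Rightarrow> nat) \<Rightarrow> nat \<Rightarrow> nat" where
  "flip_labels N mu = restrict (\<lambda>k. 3 - mu k) {0..N}"

lemma flip_labels_PiE:
  "mu \<in> Pi\<^sub>E {0..N} (\<lambda>_. {1::nat, 2}) \<Longrightarrow> flip_labels N mu \<in> Pi\<^sub>E {0..N} (\<lambda>_. {1, 2})"
  unfolding flip_labels_def by (auto simp: PiE_iff numeral_3_eq_3)

lemma flip_labels_flip_labels: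
  assumes "mu \<in> Pi\<^sub>E {0..N} (\<lambda>_. {1::nat, 2})"
  shows "flip_labels N (flip_labels N mu) = mu"
proof
  fix k
  show "flip_labels N (flip_labels N mu) k = mu k"
  proof (cases "k \<le> N")
    case True
    with assms have "mu k \<in> {1, 2}" by auto
    with True show ?thesis by (auto simp: flip_labels_def numeral_3_eq_3)
  next
    case False
    with assms show ?thesis by (simp add: flip_labels_def PiE_arb[of mu])
  qed
qed

lemma bij_betw_flip_labels:
  "bij_betw (flip_labels N) (Pi\<^sub>E {0..N} (\<lambda>_. {1::nat, 2})) (Pi\<^sub>E {0..N} (\<lambda>_. {1, 2}))"
  by (rule bij_betw_byWitness[where f' = "flip_labels N"])
    (use flip_labels_PiE flip_labels_flip_labels in blast)+

lemma transfer_summand_crossing: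
  assumes "N \<ge> 1" and mu: "mu \<in> Pi\<^sub>E {0..N} (\<lambda>_. {1::nat, 2})"
  defines "nu \<equiv> flip_labels N mu"
  shows "(if nu N \<noteq> nu 0 then 1 else 0) *
           (\<Prod>k\<in>{1..N}. Rmat n lam b (- u - lam * of_nat n) (nu (k - 1), be k) (nu k, al k))
       = (-1) ^ (N - 1) * ((if mu N \<noteq> mu 0 then 1 else 0) *
           (\<Prod>k\<in>{1..N}. Rmat n lam b u (mu (k - 1), al k) (mu k, be k)))"
proof -
  have labels: "mu k \<in> {1, 2}" if "k \<le> N" for k
    using mu that by auto
  have nu: "nu k = 3 - mu k" if "k \<le> N" for k
    using that by (simp add: nu_def flip_labels_def)
  have twist: "(nu N \<noteq> nu 0) = (mu N \<noteq> mu 0)"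
    using nu[of N] nu[of 0] labels[of N] labels[of 0] by auto
  have factors: "(\<Prod>k\<in>{1..N}. Rmat n lam b (- u - lam * of_nat n) (nu (k - 1), be k) (nu k, al k))
      = (\<Prod>k\<in>{1..N}. if mu (k - 1) = mu k then -1 else 1) *
        (\<Prod>k\<in>{1..N}. Rmat n lam b u (mu (k - 1), al k) (mu k, be k))"
    unfolding prod.distrib[symmetric]
  proof (rule prod.cong[OF refl])
    fix k assume "k \<in> {1..N}"
    then show "Rmat n lam b (- u - lam * of_nat n) (nu (k - 1), be k) (nu k, al k)
        = (if mu (k - 1) = mu k then -1 else 1) * Rmat n lam b u (mu (k - 1), al k) (mu k, be k)"
      using nu[of k] nu[of "k - 1"] Rmat_crossing[OF labels[of "k - 1"] labels[of k]] by auto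
  qed
  have signs: "(\<Prod>k\<in>{1..N}. if mu (k - 1) = mu k then -1 else 1)
      = (-1) ^ N * (if mu N = mu 0 then 1 else -1 :: complex)"
    by (rule prod_stay_signs) (rule labels)
  have "(-1) ^ N * (-1) = ((-1) ^ (N - 1) :: complex)"
    using \<open>N \<ge> 1\<close> by (cases N) auto
  then show ?thesis
    unfolding twist factors signs by auto
qed

theorem lemma2:
  fixes n N :: nat and lam u :: complex and b :: "nat \<Rightarrow> complex"
    and al be :: "nat \<Rightarrow> nat"
  assumes "n \<ge> 1"
    and "N \<ge> 1"
    and "\<And>j. b j ^ 2 = sinh (of_nat j * lam) * sinh (lam * (of_nat (n + 1) - of_nat j))"
    and "\<And>k. k \<in> {1..N} \<Longrightarrow> al k \<in> {1..n + 1}"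
    and "\<And>k. k \<in> {1..N} \<Longrightarrow> be k \<in> {1..n + 1}"
  shows "transfer n lam b N (- u - lam * of_nat n) be al = (-1) ^ (N - 1) * transfer n lam b N u al be"
proof -
  let ?P = "Pi\<^sub>E {0..N} (\<lambda>_. {1::nat, 2})"
  have "transfer n lam b N (- u - lam * of_nat n) be al
      = (\<Sum>mu\<in>?P. (if flip_labels N mu N \<noteq> flip_labels N mu 0 then 1 else 0) *
          (\<Prod>k\<in>{1..N}. Rmat n lam b (- u - lam * of_nat n)
             (flip_labels N mu (k - 1), be k) (flip_labels N mu k, al k)))"
    unfolding transfer_def by (rule sum.reindex_bij_betw[OF bij_betw_flip_labels, symmetric])
  also have "\<dots> = (\<Sum>mu\<in>?P. (-1) ^ (N - 1) * ((if mu N \<noteq> mu 0 then 1 else 0) *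
          (\<Prod>k\<in>{1..N}. Rmat n lam b u (mu (k - 1), al k) (mu k, be k))))"
    using \<open>N \<ge> 1\<close> by (intro sum.cong refl transfer_summand_crossing)
  also have "\<dots> = (-1) ^ (N - 1) * transfer n lam b N u al be"
    unfolding transfer_def by (simp add: sum_distrib_left)
  finally show ?thesis .
qed

end
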